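(* Let $\mathcal{P}_1,\mathcal{P}_2$ be finite posets and let $\mathbf{T}\in\mathbb{R}^{\mathcal{P}_1\times\mathcal{P}_2}$ be a matrix with finite ND rank. Then $\mathrm{NDrank}(\mathbf{T})$ is at least the minimum number $s$ of elements $\mathbf{v}_1,\dots,\mathbf{v}_s\in\mathcal{C}(\mathcal{P}_1)$ needed for $\mathbf{T}(\mathcal{C}(\mathcal{P}_2)^* )\subseteq\mathrm{cone}(\mathbf{v}_1,\dots,\mathbf{v}_s)$.
   Context: For a finite poset $\mathcal{Q}$, the order cone $\mathcal{C}(\mathcal{Q})\subset\mathbb{R}^{\mathcal{Q}}$ is the set of $\mathbf{f}$ with $f_x\ge0$ for all $x$ and $f_x\le f_y$ whenever $x\preceq y$. The dual cone of $\mathcal{C}\subset\mathbb{R}^p$ is $\mathcal{C}^*=\{\mathbf{a}:\mathbf{a}^\intercal\mathbf{x}\ge0\ \forall\mathbf{x}\in\mathcal{C}\}$. The matrix $\mathbf{T}$ acts as a linear map $\mathbb{R}^{\mathcal{P}_2}\to\mathbb{R}^{\mathcal{P}_1}$, and $\mathbf{T}(\mathcal{C}(\mathcal{P}_2)^* )=\{\mathbf{T}\boldsymbol\beta:\boldsymbol\beta\in\mathcal{C}(\mathcal{P}_2)^*\}$. $\mathrm{cone}(\cdot)$ is the conical hull. $\mathrm{NDrank}(\mathbf{T})$ is the minimal $r$ with $\mathbf{T}=\sum_{i=1}^r\mathbf{a}_i\mathbf{b}_i^\intercal$, $\mathbf{a}_i\in\mathcal{C}(\mathcal{P}_1)$,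 $\mathbf{b}_i\in\mathcal{C}(\mathcal{P}_2)$. *)

theory Defs
  imports Complex_Main
begin

text \<open>Finite posets are modelled as finite types with a partial order (class order).
  Vectors in R^P are functions P \<Rightarrow> real; matrices in R^(P1 x P2) are P1 \<Rightarrow> P2 \<Rightarrow> real.\<close>

definition order_cone :: "('a::{finite,order} \<Rightarrow> real) set" where
  "order_cone = {f. (\<forall>x. 0 \<le> f x) \<and> (\<forall>x y. x \<le> y \<longrightarrow> f x \<le> f y)}"

definition dual_cone :: "('a::finite \<Rightarrow> real) set \<Rightarrow> ('a \<Rightarrow> real) set" where
  "dual_cone C = {a. \<forall>x\<in>C. 0 \<le> (\<Sum>i\<in>UNIV. a i * x i)}"

definition matvec :: "('a \<Rightarrow> 'b::finite \<Rightarrow> real) \<Rightarrow> ('b \<Rightarrow> real) \<Rightarrow> ('a \<Rightarrow> real)" where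
  "matvec T \<beta> = (\<lambda>i. \<Sum>j\<in>UNIV. T i j * \<beta> j)"

definition cone_of :: "(nat \<Rightarrow> 'a \<Rightarrow> real) \<Rightarrow> nat \<Rightarrow> ('a \<Rightarrow> real) set" where
  "cone_of v s = {x. \<exists>c. (\<forall>i<s. 0 \<le> c i) \<and> x = (\<lambda>p. \<Sum>i<s. c i * v i p)}"

definition nd_decomp :: "('a::{finite,order} \<Rightarrow> 'b::{finite,order} \<Rightarrow> real) \<Rightarrow> nat \<Rightarrow> bool" where
  "nd_decomp T r = (\<exists>a b. (\<forall>i<r. a i \<in> order_cone \<and> b i \<in> order_cone) \<and>
      T = (\<lambda>x y. \<Sum>i<r. a i x * b i y))"

definition NDrank :: "('a::{finite,order} \<Rightarrow> 'b::{finite,order} \<Rightarrow> real) \<Rightarrow> nat" where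
  "NDrank T = (LEAST r. nd_decomp T r)"

end

theory Submission
  imports Defs
begin

text \<open>If \<open>T = \<Sum>\<^sub>i a\<^sub>i b\<^sub>i\<^sup>T\<close> with all \<open>b\<^sub>i\<close> in a set \<open>C\<close>, then \<open>T \<beta> = \<Sum>\<^sub>i \<langle>\<beta>, b\<^sub>i\<rangle> a\<^sub>i\<close>,
  and the coefficients \<open>\<langle>\<beta>, b\<^sub>i\<rangle>\<close> are nonnegative for \<open>\<beta> \<in> C\<^sup>*\<close>. Hence the left factors
  of an optimal ND factorisation are \<open>NDrank T\<close> vectors of \<open>C(P\<^sub>1)\<close> whose cone contains
  \<open>T(C(P\<^sub>2)\<^sup>*)\<close>.\<close>

lemma matvec_sum_outer:
  "matvec (\<lambda>x y. \<Sum>i<r. a i x * b i y) \<beta> = (\<lambda>x. \<Sum>i<r. (\<Sum>j\<in>UNIV. \<beta> j * b i j) * a i x)"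
proof
  fix x
  have "matvec (\<lambda>x y. \<Sum>i<r. a i x * b i y) \<beta> x = (\<Sum>j\<in>UNIV. \<Sum>i<r. a i x * b i j * \<beta> j)"
    by (simp add: matvec_def sum_distrib_right)
  also have "\<dots> = (\<Sum>i<r. \<Sum>j\<in>UNIV. a i x * b i j * \<beta> j)"
    by (rule sum.swap)
  also have "\<dots> = (\<Sum>i<r. (\<Sum>j\<in>UNIV. \<beta> j * b i j) * a i x)"
    by (simp add: sum_distrib_left sum_distrib_right mult_ac)
  finally show "matvec (\<lambda>x y. \<Sum>i<r. a i x * b i y) \<beta> x = \<dots>" .
qed

lemma matvec_image_dual_cone_subset_cone_of:
  assumes "\<forall>i<r. b i \<in> C"
  shows "matvec (\<lambda>x y. \<Sum>i<r. a i x * b i y) ` dual_cone C \<subseteq> cone_of a r"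
proof
  fix z assume "z \<in> matvec (\<lambda>x y. \<Sum>i<r. a i x * b i y) ` dual_cone C"
  then obtain \<beta> where \<beta>: "\<beta> \<in> dual_cone C" and z: "z = matvec (\<lambda>x y. \<Sum>i<r. a i x * b i y) \<beta>"
    by blast
  have "\<forall>i<r. 0 \<le> (\<Sum>j\<in>UNIV. \<beta> j * b i j)"
    using assms \<beta> by (simp add: dual_cone_def)
  then show "z \<in> cone_of a r"
    unfolding z matvec_sum_outer cone_of_def
    by (intro CollectI exI [of _ "\<lambda>i. \<Sum>j\<in>UNIV. \<beta> j * b i j"]) simp
qed

lemma nd_decomp_NDrank:
  assumes "\<exists>r. nd_decomp T r"
  shows "nd_decomp T (NDrank T)"
  unfolding NDrank_def using assms by (rule LeastI_ex)

theorem lemma7: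
  fixes T :: "'a::{finite,order} \<Rightarrow> 'b::{finite,order} \<Rightarrow> real"
  assumes "\<exists>r. nd_decomp T r"
  shows "(LEAST s. \<exists>v. (\<forall>i<s. v i \<in> (order_cone :: ('a \<Rightarrow> real) set)) \<and>
             matvec T ` dual_cone (order_cone :: ('b \<Rightarrow> real) set) \<subseteq> cone_of v s)
         \<le> NDrank T"
proof -
  define r where "r = NDrank T"
  have "nd_decomp T r"
    unfolding r_def using assms by (rule nd_decomp_NDrank)
  then obtain a b where ab: "\<forall>i<r. a i \<in> order_cone \<and> b i \<in> order_cone"
    and T: "T = (\<lambda>x y. \<Sum>i<r. a i x * b i y)"
    unfolding nd_decomp_def by blast
  have "matvec T ` dual_cone order_cone \<subseteq> cone_of a r"
    unfolding T using ab by (intro matvec_image_dual_cone_subset_cone_of) blast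
  with ab show ?thesis
    unfolding r_def by (intro Least_le) blast
qed

end
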